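(* Let $A=KQ/I$ be a finite-dimensional gentle algebra, let $B$ be a minimal band for $A$ and let $q>1$ be an integer. Then $B^{\times q}\le_{\mathrm{deg}}B^q$, i.e. $\mathcal{O}_{\{B^q\}}\subseteq\overline{\mathcal{O}_{B^{\times q}}}$ in the module variety $\mathrm{mod}(A,\mathbf{d})$, where $\mathbf{d}$ is the common dimension vector, $B^q$ denotes the band given by the $q$-fold concatenation of $B$ (a multi-set with one element of multiplicity one), and $B^{\times q}$ denotes the multi-set consisting of $B$ with multiplicity $q$.
   Context: Letters are arrows $\alpha\in Q_1$ (direct) and formal inverses $\alpha^{-1}$ (inverse). A string is a reduced walk in $Q$ avoiding the relations of $I$ (and their inverses); a band is a closed walk $b_1\cdots b_m$ ($m\ge1$) all of whose powers are strings, up to rotation and inversion; it is minimal if it is not of the form $(B')^r$ with $r\ge2$. For a (not necessarily minimal) band $B$, $\lambda\in K^*$, $q\ge1$, the band module $M(B,\lambda,q)$ has a copy of $K^q$ at each vertex position of the closed walk, with arrows acting by identities along the letters except one fixed letter acting by the Jordan block $J(\lambda,q)$. $\mathrm{mod}(A,\mathbf{d})$ is the affine variety of representations of $(Q,I)$ with dimension vector $\mathbf{d}$, Zariski topology, base change action of $\mathrm{GL}_{\mathbf{d}}$. For a multi-set of pairwise distinct bands $B_j$ with multiplicities $q_j$ (plus possibly strings $C_i$), its family is the union of the orbits of all modules $\bigoplus_i M(C_i)\oplus\bigoplus_j\bigoplus_k M(B_j,\lambda_{jk},q_{jk})$ with $(q_{jk})_k$ a partition of $q_j$ and $\lambda_{jk}\in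 K^*$. In particular $\mathcal{O}_{\{B^q\}}$ is the union over $\lambda\in K^*$ of the orbits of $M(B^q,\lambda,1)$, and $\mathcal{O}_{B^{\times q}}$ is the union of the orbits of the modules $\bigoplus_k M(B,\lambda_k,q_k)$ with $\sum_k q_k=q$, $\lambda_k\in K^*$. Standing assumption: $K$ is an algebraically closed field. *)

theory Defs
  imports "HOL-Computational_Algebra.Polynomial"
begin

definition alg_closed :: "'k::field itself \<Rightarrow> bool" where
  "alg_closed _ \<longleftrightarrow> (\<forall>p :: 'k poly. degree p \<ge> 1 \<longrightarrow> (\<exists>x. poly p x = 0))"

text \<open>A pair (al, be) in R is the path of length two
  "al followed by be" (t al = s be); the ideal I is generated by R.\<close>

definition path_avoiding :: "('a \<Rightarrow> 'v) \<Rightarrow> ('a \<Rightarrow> 'v) \<Rightarrow> ('a \<times> 'a) set \<Rightarrow> 'a list \<Rightarrow> bool" where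
  "path_avoiding s t R p \<longleftrightarrow>
     (\<forall>i. Suc i < length p \<longrightarrow> t (p!i) = s (p!Suc i) \<and> (p!i, p!Suc i) \<notin> R)"

definition gentle :: "('a::finite \<Rightarrow> 'v::finite) \<Rightarrow> ('a \<Rightarrow> 'v) \<Rightarrow> ('a \<times> 'a) set \<Rightarrow> bool" where
  "gentle s t R \<longleftrightarrow>
     (\<forall>(al, be) \<in> R. t al = s be) \<and>
     (\<forall>v. card {al. s al = v} \<le> 2 \<and> card {al. t al = v} \<le> 2) \<and>
     (\<forall>be. card {al. t al = s be \<and> (al, be) \<notin> R} \<le> 1 \<and>
           card {ga. s ga = t be \<and> (be, ga) \<notin> R} \<le> 1) \<and>
     (\<forall>be. card {al. (al, be) \<in> R} \<le> 1 \<and> card {ga. (be, ga) \<in> R} \<le> 1) \<and>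
     \<comment> \<open>finite-dimensionality of KQ/I: paths avoiding R have bounded length\<close>
     (\<exists>N. \<forall>p. path_avoiding s t R p \<longrightarrow> length p \<le> N)"

datatype 'a letter = Dir 'a | Inv 'a

fun lsrc :: "('a \<Rightarrow> 'v) \<Rightarrow> ('a \<Rightarrow> 'v) \<Rightarrow> 'a letter \<Rightarrow> 'v" where
  "lsrc s t (Dir a) = s a"
| "lsrc s t (Inv a) = t a"

fun ltgt :: "('a \<Rightarrow> 'v) \<Rightarrow> ('a \<Rightarrow> 'v) \<Rightarrow> 'a letter \<Rightarrow> 'v" where
  "ltgt s t (Dir a) = t a"
| "ltgt s t (Inv a) = s a"

text \<open>Two consecutive letters x y (x first) are admissible in a string:
  they compose, the walk is reduced, and neither the pair nor its inverse is a relation.\<close>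
fun ok_pair :: "('a \<Rightarrow> 'v) \<Rightarrow> ('a \<Rightarrow> 'v) \<Rightarrow> ('a \<times> 'a) set \<Rightarrow> 'a letter \<Rightarrow> 'a letter \<Rightarrow> bool" where
  "ok_pair s t R (Dir a) (Dir b) \<longleftrightarrow> t a = s b \<and> (a, b) \<notin> R"
| "ok_pair s t R (Inv a) (Inv b) \<longleftrightarrow> s a = t b \<and> (b, a) \<notin> R"
| "ok_pair s t R (Dir a) (Inv b) \<longleftrightarrow> t a = t b \<and> a \<noteq> b"
| "ok_pair s t R (Inv a) (Dir b) \<longleftrightarrow> s a = s b \<and> a \<noteq> b"

definition is_string :: "('a \<Rightarrow> 'v) \<Rightarrow> ('a \<Rightarrow> 'v) \<Rightarrow> ('a \<times> 'a) set \<Rightarrow> 'a letter list \<Rightarrow> bool" where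
  "is_string s t R w \<longleftrightarrow> (\<forall>i. Suc i < length w \<longrightarrow> ok_pair s t R (w!i) (w!Suc i))"

definition is_band :: "('a \<Rightarrow> 'v) \<Rightarrow> ('a \<Rightarrow> 'v) \<Rightarrow> ('a \<times> 'a) set \<Rightarrow> 'a letter list \<Rightarrow> bool" where
  "is_band s t R B \<longleftrightarrow> B \<noteq> [] \<and> ltgt s t (last B) = lsrc s t (hd B) \<and>
     (\<forall>n\<ge>1. is_string s t R (concat (replicate n B)))"

definition minimal_band :: "('a \<Rightarrow> 'v) \<Rightarrow> ('a \<Rightarrow> 'v) \<Rightarrow> ('a \<times> 'a) set \<Rightarrow> 'a letter list \<Rightarrow> bool" where
  "minimal_band s t R B \<longleftrightarrow> is_band s t R B \<and>
     \<not> (\<exists>B' r. r \<ge> 2 \<and> B = concat (replicate r B'))"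

text \<open>A finite-dimensional representation is given by a finite basis E, a vertex
  for each basis vector, and for each arrow a the matrix act a e' e
  (coefficient of e' in a applied to e).\<close>


type_synonym ('e,'v,'a,'k) repr = "'e set \<times> ('e \<Rightarrow> 'v) \<times> ('a \<Rightarrow> 'e \<Rightarrow> 'e \<Rightarrow> 'k)"

definition rep_iso :: "('e1,'v,'a,'k::field) repr \<Rightarrow> ('e2,'v,'a,'k) repr \<Rightarrow> bool" where
  "rep_iso M N \<longleftrightarrow> (case M of (E1, vt1, a1) \<Rightarrow> case N of (E2, vt2, a2) \<Rightarrow>
     (\<exists>(\<phi> :: 'e2 \<Rightarrow> 'e1 \<Rightarrow> 'k) (\<psi> :: 'e1 \<Rightarrow> 'e2 \<Rightarrow> 'k).
        (\<forall>e2 e1. \<phi> e2 e1 \<noteq> 0 \<longrightarrow> e1 \<in> E1 \<and> e2 \<in> E2 \<and> vt1 e1 = vt2 e2) \<and>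
        (\<forall>e1 e2. \<psi> e1 e2 \<noteq> 0 \<longrightarrow> e1 \<in> E1 \<and> e2 \<in> E2 \<and> vt1 e1 = vt2 e2) \<and>
        (\<forall>e\<in>E2. \<forall>e'\<in>E2. (\<Sum>x\<in>E1. \<phi> e x * \<psi> x e') = (if e = e' then 1 else 0)) \<and>
        (\<forall>e\<in>E1. \<forall>e'\<in>E1. (\<Sum>x\<in>E2. \<psi> e x * \<phi> x e') = (if e = e' then 1 else 0)) \<and>
        (\<forall>al. \<forall>e2\<in>E2. \<forall>e1\<in>E1.
           (\<Sum>x\<in>E2. a2 al e2 x * \<phi> x e1) = (\<Sum>y\<in>E1. \<phi> e2 y * a1 al y e1))))"

definition dsum :: "('e,'v,'a,'k::field) repr list \<Rightarrow> (nat \<times> 'e,'v,'a,'k) repr" where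
  "dsum Ms = ({(k, e). k < length Ms \<and> e \<in> fst (Ms!k)},
              (\<lambda>(k, e). fst (snd (Ms!k)) e),
              (\<lambda>al (k', e') (k, e). if k = k' \<and> k < length Ms then snd (snd (Ms!k)) al e' e else 0))"

definition jordan :: "'k::field \<Rightarrow> nat \<Rightarrow> nat \<Rightarrow> 'k" where
  "jordan lam i j = (if i = j then lam else if j = Suc i then 1 else 0)"

text \<open>M(B, lam, q): basis (p, j), p a position of the closed walk B (p < length B),
  j < q; position p sits at the vertex lsrc (B!p); letter B!p joins position p
  to position (p+1) mod m; all letters act by identity, except letter 0
  which acts by the Jordan block J(lam, q).\<close>

definition band_module :: "('a \<Rightarrow> 'v) \<Rightarrow> ('a \<Rightarrow> 'v) \<Rightarrow> 'a letter list \<Rightarrow> 'k::field \<Rightarrow> nat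
     \<Rightarrow> (nat \<times> nat,'v,'a,'k) repr" where
  "band_module s t B lam q =
    (let m = length B;
         E = {(p, j). p < m \<and> j < q};
         blk = (\<lambda>p0 j' j. if p0 = 0 then jordan lam j' j else (if j' = j then 1 else 0))
     in (E, (\<lambda>(p, j). lsrc s t (B!p)),
         (\<lambda>al (p', j') (p, j).
            if (p, j) \<in> E \<and> (p', j') \<in> E then
              (\<Sum>p0<m. (if B!p0 = Dir al \<and> p = p0 \<and> p' = Suc p0 mod m then blk p0 j' j else 0)
                     + (if B!p0 = Inv al \<and> p = Suc p0 mod m \<and> p' = p0 then blk p0 j' j else 0))
            else 0)))"

definition band_dimvec :: "('a \<Rightarrow> 'v) \<Rightarrow> ('a \<Rightarrow> 'v) \<Rightarrow> 'a letter list \<Rightarrow> nat \<Rightarrow> 'v \<Rightarrow> nat" where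
  "band_dimvec s t B q v = q * card {p. p < length B \<and> lsrc s t (B!p) = v}"

text \<open>A point of the affine space of representations with dimension vector d is
  x :: 'a \<times> nat \<times> nat \<Rightarrow> 'k, where x (al, i, j) is the (i, j) entry of the
  d(t al) \<times> d(s al) matrix of al; coordinates outside these ranges are 0.\<close>

definition mod_var :: "('a::finite \<Rightarrow> 'v::finite) \<Rightarrow> ('a \<Rightarrow> 'v) \<Rightarrow> ('a \<times> 'a) set \<Rightarrow> ('v \<Rightarrow> nat)
     \<Rightarrow> ('a \<times> nat \<times> nat \<Rightarrow> 'k::field) set" where
  "mod_var s t R d = {x.
     (\<forall>al i j. \<not> (i < d (t al) \<and> j < d (s al)) \<longrightarrow> x (al, i, j) = 0) \<and>
     (\<forall>(al, be) \<in> R. \<forall>i < d (t be). \<forall>k < d (s al).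
        (\<Sum>j< d (t al). x (be, i, j) * x (al, j, k)) = 0)}"

definition point_rep :: "('a \<Rightarrow> 'v) \<Rightarrow> ('a \<Rightarrow> 'v) \<Rightarrow> ('v \<Rightarrow> nat) \<Rightarrow> ('a \<times> nat \<times> nat \<Rightarrow> 'k::field)
     \<Rightarrow> ('v \<times> nat,'v,'a,'k) repr" where
  "point_rep s t d x = ({(v, i). i < d v}, fst,
     (\<lambda>al (v', i) (v, j). if v = s al \<and> v' = t al \<and> i < d v' \<and> j < d v then x (al, i, j) else 0))"

text \<open>Zariski topology: polynomial functions in the coordinates.\<close>

inductive_set polyfun :: "(('c \<Rightarrow> 'k::field) \<Rightarrow> 'k) set" where
  const: "(\<lambda>_. c) \<in> polyfun"
| coord: "(\<lambda>x. x i) \<in> polyfun"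
| add: "f \<in> polyfun \<Longrightarrow> g \<in> polyfun \<Longrightarrow> (\<lambda>x. f x + g x) \<in> polyfun"
| mult: "f \<in> polyfun \<Longrightarrow> g \<in> polyfun \<Longrightarrow> (\<lambda>x. f x * g x) \<in> polyfun"

definition zariski_closure :: "('c \<Rightarrow> 'k::field) set \<Rightarrow> ('c \<Rightarrow> 'k) set" where
  "zariski_closure S = {x. \<forall>f \<in> polyfun. (\<forall>y\<in>S. f y = 0) \<longrightarrow> f x = 0}"

text \<open>O_{B^q}: union over lam \<noteq> 0 of the orbits of M(B^q, lam, 1).\<close>
definition fam_power :: "('a::finite \<Rightarrow> 'v::finite) \<Rightarrow> ('a \<Rightarrow> 'v) \<Rightarrow> ('a \<times> 'a) set \<Rightarrow> ('v \<Rightarrow> nat)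
     \<Rightarrow> 'a letter list \<Rightarrow> nat \<Rightarrow> ('a \<times> nat \<times> nat \<Rightarrow> 'k::field) set" where
  "fam_power s t R d B q = {x \<in> mod_var s t R d.
     \<exists>lam::'k. lam \<noteq> 0 \<and>
       rep_iso (point_rep s t d x) (band_module s t (concat (replicate q B)) lam 1)}"

text \<open>O_{B^{\<times>q}}: union of the orbits of \<Oplus>_k M(B, lam_k, q_k), (q_k) a partition of q.\<close>
definition fam_mult :: "('a::finite \<Rightarrow> 'v::finite) \<Rightarrow> ('a \<Rightarrow> 'v) \<Rightarrow> ('a \<times> 'a) set \<Rightarrow> ('v \<Rightarrow> nat)
     \<Rightarrow> 'a letter list \<Rightarrow> nat \<Rightarrow> ('a \<times> nat \<times> nat \<Rightarrow> 'k::field) set" where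
  "fam_mult s t R d B q = {x \<in> mod_var s t R d.
     \<exists>ps :: ('k \<times> nat) list.
       (\<forall>(lam, qk) \<in> set ps. lam \<noteq> 0 \<and> qk \<ge> 1) \<and> (\<Sum>(lam, qk)\<leftarrow>ps. qk) = q \<and>
       rep_iso (point_rep s t d x) (dsum (map (\<lambda>(lam, qk). band_module s t B lam qk) ps))}"

end

theory Submission
  imports Defs Jordan_Normal_Form.Jordan_Normal_Form_Existence
begin

text \<open>
  Unrolling the closed walk \<open>B\<^sup>q\<close> identifies \<open>M(B\<^sup>q, \<lambda>, 1)\<close> with the module \<open>M(B, C, q)\<close>
  on the walk \<open>B\<close> in which the first letter acts by the companion matrix \<open>C\<close> of
  \<open>x\<^sup>q - \<lambda>\<close> and all other letters act by the identity. The isomorphism type of \<open>M(B, C, q)\<close>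
  only depends on the similarity class of \<open>C\<close>. Over an algebraically closed field \<open>C\<close> is
  similar to a Jordan matrix, whose eigenvalues are nonzero because \<open>C\<close> is invertible, and
  along its Jordan blocks \<open>J(\<lambda>\<^sub>k, q\<^sub>k)\<close> the module splits into the band modules
  \<open>M(B, \<lambda>\<^sub>k, q\<^sub>k)\<close>. So every point of the family of \<open>B\<^sup>q\<close> already lies in the family of
  \<open>B\<^sup>\<times>\<^sup>q\<close>, not only in its closure.
\<close>

section \<open>Jordan normal form over an algebraically closed field\<close>

lemma inverse_mat_if_det_nonzero:
  fixes A :: "'k::field mat"
  assumes A: "A \<in> carrier_mat n n" and det: "det A \<noteq> 0"
  obtains A' where "A' \<in> carrier_mat n n" "A * A' = 1\<^sub>m n" "A' * A = 1\<^sub>m n"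
  using det_non_zero_imp_unit[OF A det, of undefined] that
  unfolding Units_def ring_mat_def by auto

lemma invertible_mat_with_first_col:
  fixes v :: "'k::field vec"
  assumes v: "v \<in> carrier_vec n" and v0: "v \<noteq> 0\<^sub>v n"
  obtains W W' where "W \<in> carrier_mat n n" "W' \<in> carrier_mat n n"
    "W * W' = 1\<^sub>m n" "W' * W = 1\<^sub>m n" "W *\<^sub>v unit_vec n 0 = v"
proof -
  obtain k where k: "k < n" and vk: "v $ k \<noteq> 0"
    using v v0 by (metis carrier_vecD eq_vecI index_zero_vec)
  define S :: "'k mat" where "S = swaprows_mat n 0 k"
  have S: "S \<in> carrier_mat n n" and SS: "S * S = 1\<^sub>m n"
    using k unfolding S_def by (auto intro: swaprows_mat_inv)
  define u where "u = S *\<^sub>v v"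
  have u: "u \<in> carrier_vec n" using S v unfolding u_def by simp
  have "u $ 0 = row S 0 \<bullet> v" using k S unfolding u_def by simp
  also have "row S 0 = unit_vec n k" using k unfolding S_def by (simp add: row_swaprows)
  finally have u0: "u $ 0 \<noteq> 0" using vk k v by simp
  have Su: "S *\<^sub>v u = v" using S v unfolding u_def by (simp add: assoc_mult_mat_vec[symmetric] SS)
  define L where "L = mat n n (\<lambda>(i, j). if j = 0 then u $ i else if i = j then 1 else 0)"
  have L: "L \<in> carrier_mat n n" unfolding L_def by simp
  have "det L = prod_list (diag_mat L)"
    by (rule det_lower_triangular[OF _ L]) (auto simp: L_def)
  also have "\<dots> \<noteq> 0" using u0 by (auto simp: L_def diag_mat_def)
  finally obtain L' where L': "L' \<in> carrier_mat n n" "L * L' = 1\<^sub>m n" "L' * L = 1\<^sub>m n"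
    using inverse_mat_if_det_nonzero[OF L] by blast
  have "L *\<^sub>v unit_vec n 0 = u"
    using u k by (intro eq_vecI) (auto simp: L_def)
  show thesis
  proof (rule that[of "S * L" "L' * S"])
    show "S * L * (L' * S) = 1\<^sub>m n"
      using S L L'
      by (simp add: assoc_mult_mat[of _ n n _ n _ n] assoc_mult_mat[OF L L'(1) S, symmetric] SS)
    then show "L' * S * (S * L) = 1\<^sub>m n"
      using S L L' by (auto intro: mat_mult_left_right_inverse)
    show "S * L *\<^sub>v unit_vec n 0 = v"
      using S L \<open>L *\<^sub>v unit_vec n 0 = u\<close> Su by simp
  qed (use S L L' in auto)
qed

lemma similar_mat_eigenvector_first_col:
  fixes A :: "'k::field mat"
  assumes A: "A \<in> carrier_mat n n" and ev: "eigenvector A v e"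
  obtains A' where "A' \<in> carrier_mat n n" "similar_mat A A'"
    "\<And>i. i < n \<Longrightarrow> A' $$ (i, 0) = (if i = 0 then e else 0)"
proof -
  have v: "v \<in> carrier_vec n" "v \<noteq> 0\<^sub>v n" and Av: "A *\<^sub>v v = e \<cdot>\<^sub>v v"
    using ev A unfolding eigenvector_def by auto
  obtain W W' where W: "W \<in> carrier_mat n n" and W': "W' \<in> carrier_mat n n"
    and WW': "W * W' = 1\<^sub>m n" and W'W: "W' * W = 1\<^sub>m n" and Wv: "W *\<^sub>v unit_vec n 0 = v"
    using invertible_mat_with_first_col[OF v] by blast
  define A' where "A' = W' * A * W"
  have A': "A' \<in> carrier_mat n n" using W W' A unfolding A'_def by auto
  have "W * A' * W' = (W * W') * A * (W * W')"
    unfolding A'_def using W W' A by (simp add: assoc_mult_mat[of _ n n _ n _ n])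
  then have "similar_mat_wit A A' W W'"
    using A unfolding WW' by (intro similar_mat_witI[OF WW' W'W _ A A' W W']) simp
  then have "similar_mat A A'" unfolding similar_mat_def by blast
  have "A' *\<^sub>v unit_vec n 0 = W' *\<^sub>v (A *\<^sub>v (W *\<^sub>v unit_vec n 0))"
    unfolding A'_def using W W' A by (simp add: assoc_mult_mat_vec[of _ n n _ n])
  also have "\<dots> = e \<cdot>\<^sub>v (W' *\<^sub>v (W *\<^sub>v unit_vec n 0))"
    unfolding Wv Av using W' v by (simp add: mult_mat_vec)
  also have "W' *\<^sub>v (W *\<^sub>v unit_vec n 0) = unit_vec n 0"
    using W W' by (simp add: assoc_mult_mat_vec[symmetric, of _ n n _ n] W'W)
  finally have col0: "A' *\<^sub>v unit_vec n 0 = e \<cdot>\<^sub>v unit_vec n 0" .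
  have "A' $$ (i, 0) = (if i = 0 then e else 0)" if "i < n" for i
    using arg_cong[OF col0, of "\<lambda>w. w $ i"] A' that by simp
  with A' \<open>similar_mat A A'\<close> show thesis using that by blast
qed

lemma triangularizable_if_alg_closed:
  fixes A :: "'k::field mat"
  assumes alg: "alg_closed TYPE('k)" and A: "A \<in> carrier_mat n n"
  obtains T where "T \<in> carrier_mat n n" "upper_triangular T" "similar_mat A T"
  using A
proof (induction n arbitrary: A thesis)
  case 0
  then show ?case using similar_mat_refl[OF 0(2)] by (auto simp: upper_triangular_def)
next
  case (Suc n A)
  have A: "A \<in> carrier_mat (Suc n) (Suc n)" by fact
  have "degree (char_poly A) = Suc n" using degree_monic_char_poly[OF A] by simp
  then obtain e where "poly (char_poly A) e = 0" using alg unfolding alg_closed_def by force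
  then obtain v where "eigenvector A v e"
    using eigenvalue_root_char_poly[OF A] unfolding eigenvalue_def by auto
  then obtain A' where A': "A' \<in> carrier_mat (Suc n) (Suc n)" and "similar_mat A A'"
    and col0: "\<And>i. i < Suc n \<Longrightarrow> A' $$ (i, 0) = (if i = 0 then e else 0)"
    using similar_mat_eigenvector_first_col[OF A] by blast
  obtain A1 A2 A0 A3 where split: "split_block A' 1 1 = (A1, A2, A0, A3)"
    by (cases "split_block A' 1 1")
  have "dim_row A' = 1 + n" "dim_col A' = 1 + n" using A' by auto
  from split_block[OF split this] have A2: "A2 \<in> carrier_mat 1 n" and A3: "A3 \<in> carrier_mat n n"
    and A'_blocks: "A' = four_block_mat A1 A2 A0 A3" by auto
  have A1: "A1 = mat 1 1 (\<lambda>_. e)" and A0: "A0 = 0\<^sub>m n 1"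
    using split A' col0 unfolding split_block_def Let_def by auto
  obtain T3 where T3: "T3 \<in> carrier_mat n n" "upper_triangular T3" and "similar_mat A3 T3"
    using Suc.IH[OF _ A3] by blast
  then obtain P Q where PQ: "similar_mat_wit A3 T3 P Q" unfolding similar_mat_def by blast
  from similar_mat_witD2[OF A3 PQ] have P: "P \<in> carrier_mat n n" and Q: "Q \<in> carrier_mat n n"
    and "P * Q = 1\<^sub>m n" by auto
  define T where "T = four_block_mat A1 (A2 * P) A0 T3"
  have "similar_mat_wit A' T (four_block_mat (1\<^sub>m 1) (0\<^sub>m 1 n) (0\<^sub>m n 1) P)
      (four_block_mat (1\<^sub>m 1) (0\<^sub>m 1 n) (0\<^sub>m n 1) Q)"
    unfolding A'_blocks T_def
    by (rule similar_mat_wit_four_block[OF similar_mat_wit_refl PQ])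
      (use A1 A0 A2 A3 P Q \<open>P * Q = 1\<^sub>m n\<close> in auto)
  then have "similar_mat A T"
    using \<open>similar_mat A A'\<close> similar_mat_trans unfolding similar_mat_def by blast
  moreover have "upper_triangular T"
    unfolding T_def A0 using T3 A1 by (intro upper_triangular_four_block) auto
  moreover have "T \<in> carrier_mat (Suc n) (Suc n)" unfolding T_def using A1 A2 P T3 by auto
  ultimately show ?case using Suc.prems by blast
qed

lemma jordan_nf_exists_if_alg_closed:
  fixes A :: "'k::field mat"
  assumes "alg_closed TYPE('k)" and "A \<in> carrier_mat n n"
  obtains ns where "jordan_nf A ns"
  using triangularizable_if_alg_closed[OF assms] triangular_to_jnf_vector similar_mat_trans
  unfolding jordan_nf_def by metis

lemma jordan_nf_eigenvalue_nonzero: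
  fixes A :: "'k::field mat"
  assumes A: "A \<in> carrier_mat n n" and det: "det A \<noteq> 0"
    and jnf: "jordan_nf A ns" and block: "(m, a) \<in> set ns"
  shows "a \<noteq> 0"
proof
  assume "a = 0"
  moreover have "m \<noteq> 0" using jnf block unfolding jordan_nf_def by force
  ultimately have "poly ([:- a, 1:] ^ m) 0 = 0" by simp
  moreover have "poly (char_poly A) 0 = (\<Prod>(m, a)\<leftarrow>ns. poly ([:- a, 1:] ^ m) 0)"
    unfolding jordan_nf_char_poly[OF jnf] by (induction ns) auto
  ultimately have "poly (char_poly A) 0 = 0"
    using block by force
  then obtain v where "eigenvector A v 0"
    using eigenvalue_root_char_poly[OF A] unfolding eigenvalue_def by auto
  then have "v \<in> carrier_vec n" "v \<noteq> 0\<^sub>v n" "A *\<^sub>v v = 0\<^sub>v n"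
    using A unfolding eigenvector_def by auto
  then have "det A = 0" using det_0_iff_vec_prod_zero_field[OF A] by blast
  with det show False ..
qed

lemma sum_comp_inverse:
  fixes f1 :: "'b \<Rightarrow> 'a \<Rightarrow> 'k::field" and f2 :: "'c \<Rightarrow> 'b \<Rightarrow> 'k"
  assumes fin: "finite E2"
    and inv1: "\<forall>e\<in>E2. \<forall>e'\<in>E2. (\<Sum>x\<in>E1. f1 e x * g1 x e') = (if e = e' then 1 else 0)"
    and inv2: "\<forall>e\<in>E3. \<forall>e'\<in>E3. (\<Sum>y\<in>E2. f2 e y * g2 y e') = (if e = e' then 1 else 0)"
    and e: "e \<in> E3" "e' \<in> E3"
  shows "(\<Sum>x\<in>E1. (\<Sum>y\<in>E2. f2 e y * f1 y x) * (\<Sum>z\<in>E2. g1 x z * g2 z e'))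
      = (if e = e' then 1 else 0)"
proof -
  have "(\<Sum>x\<in>E1. (\<Sum>y\<in>E2. f2 e y * f1 y x) * (\<Sum>z\<in>E2. g1 x z * g2 z e'))
      = (\<Sum>x\<in>E1. \<Sum>y\<in>E2. \<Sum>z\<in>E2. f2 e y * (f1 y x * g1 x z) * g2 z e')"
    unfolding sum_product by (intro sum.cong refl) (simp add: mult.assoc)
  also have "\<dots> = (\<Sum>y\<in>E2. \<Sum>z\<in>E2. f2 e y * (\<Sum>x\<in>E1. f1 y x * g1 x z) * g2 z e')"
    by (subst sum.swap, intro sum.cong refl, subst sum.swap)
      (simp add: sum_distrib_left sum_distrib_right)
  also have "\<dots> = (\<Sum>y\<in>E2. \<Sum>z\<in>E2. if y = z then f2 e y * g2 z e' else 0)"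
    using inv1 by (intro sum.cong refl) auto
  also have "\<dots> = (\<Sum>y\<in>E2. f2 e y * g2 y e')"
    using fin by simp
  finally show ?thesis using inv2 e by simp
qed

lemma sum_comp_intertwine:
  fixes f1 :: "'b \<Rightarrow> 'a \<Rightarrow> 'k::comm_semiring_0" and f2 :: "'c \<Rightarrow> 'b \<Rightarrow> 'k"
  assumes c1: "\<forall>e2\<in>E2. \<forall>e1\<in>E1. (\<Sum>x\<in>E2. a2 e2 x * f1 x e1) = (\<Sum>y\<in>E1. f1 e2 y * a1 y e1)"
    and c2: "\<forall>e3\<in>E3. \<forall>e2\<in>E2. (\<Sum>x\<in>E3. a3 e3 x * f2 x e2) = (\<Sum>y\<in>E2. f2 e3 y * a2 y e2)"
    and e: "e3 \<in> E3" "e1 \<in> E1"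
  shows "(\<Sum>x\<in>E3. a3 e3 x * (\<Sum>y\<in>E2. f2 x y * f1 y e1))
      = (\<Sum>w\<in>E1. (\<Sum>y\<in>E2. f2 e3 y * f1 y w) * a1 w e1)"
proof -
  have "(\<Sum>x\<in>E3. a3 e3 x * (\<Sum>y\<in>E2. f2 x y * f1 y e1))
      = (\<Sum>y\<in>E2. (\<Sum>x\<in>E3. a3 e3 x * f2 x y) * f1 y e1)"
    unfolding sum_distrib_left by (subst sum.swap) (simp add: sum_distrib_right mult.assoc)
  also have "\<dots> = (\<Sum>y\<in>E2. (\<Sum>z\<in>E2. f2 e3 z * a2 z y) * f1 y e1)"
    using c2 e by (intro sum.cong refl) auto
  also have "\<dots> = (\<Sum>z\<in>E2. f2 e3 z * (\<Sum>y\<in>E2. a2 z y * f1 y e1))"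
    unfolding sum_distrib_left sum_distrib_right by (subst sum.swap) (simp add: mult.assoc)
  also have "\<dots> = (\<Sum>z\<in>E2. f2 e3 z * (\<Sum>w\<in>E1. f1 z w * a1 w e1))"
    using c1 e by (intro sum.cong refl) auto
  also have "\<dots> = (\<Sum>w\<in>E1. (\<Sum>y\<in>E2. f2 e3 y * f1 y w) * a1 w e1)"
    unfolding sum_distrib_left sum_distrib_right by (subst sum.swap) (simp add: mult.assoc)
  finally show ?thesis .
qed

lemma rep_iso_trans:
  fixes M :: "('e1, 'v, 'a, 'k::field) repr" and N :: "('e2, 'v, 'a, 'k) repr"
    and L :: "('e3, 'v, 'a, 'k) repr"
  assumes MN: "rep_iso M N" and NL: "rep_iso N L" and fin: "finite (fst N)"
  shows "rep_iso M L"
proof -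
  obtain E1 vt1 a1 where M: "M = (E1, vt1, a1)" by (cases M)
  obtain E2 vt2 a2 where N: "N = (E2, vt2, a2)" by (cases N)
  obtain E3 vt3 a3 where L: "L = (E3, vt3, a3)" by (cases L)
  have f2: "finite E2" using fin N by simp
  from MN obtain \<phi>1 :: "'e2 \<Rightarrow> 'e1 \<Rightarrow> 'k" and \<psi>1 where
    s1: "\<forall>e2 e1. \<phi>1 e2 e1 \<noteq> 0 \<longrightarrow> e1 \<in> E1 \<and> e2 \<in> E2 \<and> vt1 e1 = vt2 e2" and
    t1: "\<forall>e1 e2. \<psi>1 e1 e2 \<noteq> 0 \<longrightarrow> e1 \<in> E1 \<and> e2 \<in> E2 \<and> vt1 e1 = vt2 e2" and
    i1: "\<forall>e\<in>E2. \<forall>e'\<in>E2. (\<Sum>x\<in>E1. \<phi>1 e x * \<psi>1 x e') = (if e = e' then 1 else 0)" and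
    j1: "\<forall>e\<in>E1. \<forall>e'\<in>E1. (\<Sum>x\<in>E2. \<psi>1 e x * \<phi>1 x e') = (if e = e' then 1 else 0)" and
    c1: "\<forall>al. \<forall>e2\<in>E2. \<forall>e1\<in>E1. (\<Sum>x\<in>E2. a2 al e2 x * \<phi>1 x e1) = (\<Sum>y\<in>E1. \<phi>1 e2 y * a1 al y e1)"
    unfolding rep_iso_def M N by auto
  from NL obtain \<phi>2 :: "'e3 \<Rightarrow> 'e2 \<Rightarrow> 'k" and \<psi>2 where
    s2: "\<forall>e2 e1. \<phi>2 e2 e1 \<noteq> 0 \<longrightarrow> e1 \<in> E2 \<and> e2 \<in> E3 \<and> vt2 e1 = vt3 e2" and
    t2: "\<forall>e1 e2. \<psi>2 e1 e2 \<noteq> 0 \<longrightarrow> e1 \<in> E2 \<and> e2 \<in> E3 \<and> vt2 e1 = vt3 e2" and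
    i2: "\<forall>e\<in>E3. \<forall>e'\<in>E3. (\<Sum>x\<in>E2. \<phi>2 e x * \<psi>2 x e') = (if e = e' then 1 else 0)" and
    j2: "\<forall>e\<in>E2. \<forall>e'\<in>E2. (\<Sum>x\<in>E3. \<psi>2 e x * \<phi>2 x e') = (if e = e' then 1 else 0)" and
    c2: "\<forall>al. \<forall>e2\<in>E3. \<forall>e1\<in>E2. (\<Sum>x\<in>E3. a3 al e2 x * \<phi>2 x e1) = (\<Sum>y\<in>E2. \<phi>2 e2 y * a2 al y e1)"
    unfolding rep_iso_def N L by auto
  define \<phi> where "\<phi> = (\<lambda>e3 e1. \<Sum>y\<in>E2. \<phi>2 e3 y * \<phi>1 y e1)"
  define \<psi> where "\<psi> = (\<lambda>e1 e3. \<Sum>y\<in>E2. \<psi>1 e1 y * \<psi>2 y e3)"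
  have s: "\<forall>e3 e1. \<phi> e3 e1 \<noteq> 0 \<longrightarrow> e1 \<in> E1 \<and> e3 \<in> E3 \<and> vt1 e1 = vt3 e3"
  proof (intro allI impI)
    fix e3 e1 assume "\<phi> e3 e1 \<noteq> 0"
    then obtain y where "\<phi>2 e3 y * \<phi>1 y e1 \<noteq> 0"
      unfolding \<phi>_def by (rule sum.not_neutral_contains_not_neutral)
    then show "e1 \<in> E1 \<and> e3 \<in> E3 \<and> vt1 e1 = vt3 e3" using s1 s2 by fastforce
  qed
  have t: "\<forall>e1 e3. \<psi> e1 e3 \<noteq> 0 \<longrightarrow> e1 \<in> E1 \<and> e3 \<in> E3 \<and> vt1 e1 = vt3 e3"
  proof (intro allI impI)
    fix e1 e3 assume "\<psi> e1 e3 \<noteq> 0"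
    then obtain y where "\<psi>1 e1 y * \<psi>2 y e3 \<noteq> 0"
      unfolding \<psi>_def by (rule sum.not_neutral_contains_not_neutral)
    then show "e1 \<in> E1 \<and> e3 \<in> E3 \<and> vt1 e1 = vt3 e3" using t1 t2 by fastforce
  qed
  have i: "\<forall>e\<in>E3. \<forall>e'\<in>E3. (\<Sum>x\<in>E1. \<phi> e x * \<psi> x e') = (if e = e' then 1 else 0)"
    unfolding \<phi>_def \<psi>_def using sum_comp_inverse[OF f2 i1 i2] by blast
  have j: "\<forall>e\<in>E1. \<forall>e'\<in>E1. (\<Sum>x\<in>E3. \<psi> e x * \<phi> x e') = (if e = e' then 1 else 0)"
    unfolding \<phi>_def \<psi>_def using sum_comp_inverse[OF f2 j2 j1] by blast
  have c: "\<forall>al. \<forall>e3\<in>E3. \<forall>e1\<in>E1. (\<Sum>x\<in>E3. a3 al e3 x * \<phi> x e1) = (\<Sum>y\<in>E1. \<phi> e3 y * a1 al y e1)"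
    unfolding \<phi>_def
  proof (intro allI ballI)
    fix al e3 e1 assume "e3 \<in> E3" "e1 \<in> E1"
    with c1 c2 show "(\<Sum>x\<in>E3. a3 al e3 x * (\<Sum>y\<in>E2. \<phi>2 x y * \<phi>1 y e1))
        = (\<Sum>w\<in>E1. (\<Sum>y\<in>E2. \<phi>2 e3 y * \<phi>1 y w) * a1 al w e1)"
      by (intro sum_comp_intertwine[of E2 E1 "a2 al"]) auto
  qed
  show ?thesis unfolding rep_iso_def M L prod.case
    by (intro exI[of _ \<phi>] exI[of _ \<psi>] conjI s t i j c)
qed

lemma rep_iso_of_bij:
  fixes g :: "'e2 \<Rightarrow> 'e1"
  assumes bij: "bij_betw g E2 E1" and fin: "finite E1"
    and vt: "\<And>e. e \<in> E2 \<Longrightarrow> vt1 (g e) = vt2 e"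
    and act: "\<And>al e e'. e \<in> E2 \<Longrightarrow> e' \<in> E2 \<Longrightarrow> a2 al e' e = (a1 al (g e') (g e) :: 'k::field)"
  shows "rep_iso (E1, vt1, a1) (E2, vt2, a2)"
proof -
  have inj: "inj_on g E2" and img: "g ` E2 = E1" using bij unfolding bij_betw_def by auto
  define \<phi> :: "'e2 \<Rightarrow> 'e1 \<Rightarrow> 'k" where "\<phi> = (\<lambda>e2 e1. if e2 \<in> E2 \<and> e1 = g e2 then 1 else 0)"
  define \<psi> :: "'e1 \<Rightarrow> 'e2 \<Rightarrow> 'k" where "\<psi> = (\<lambda>e1 e2. \<phi> e2 e1)"
  have reindex: "(\<Sum>x\<in>E2. f (g x)) = (\<Sum>y\<in>E1. f y)" for f :: "'e1 \<Rightarrow> 'k"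
    using sum.reindex_bij_betw[OF bij] by blast
  have s: "\<forall>e2 e1. \<phi> e2 e1 \<noteq> 0 \<longrightarrow> e1 \<in> E1 \<and> e2 \<in> E2 \<and> vt1 e1 = vt2 e2"
    unfolding \<phi>_def using img vt by auto
  have t: "\<forall>e1 e2. \<psi> e1 e2 \<noteq> 0 \<longrightarrow> e1 \<in> E1 \<and> e2 \<in> E2 \<and> vt1 e1 = vt2 e2"
    unfolding \<psi>_def using s by blast
  have i: "\<forall>e\<in>E2. \<forall>e'\<in>E2. (\<Sum>x\<in>E1. \<phi> e x * \<psi> x e') = (if e = e' then 1 else 0)"
  proof (intro ballI)
    fix e e' assume e: "e \<in> E2" and e': "e' \<in> E2"
    have "(\<Sum>x\<in>E1. \<phi> e x * \<psi> x e') = (\<Sum>x\<in>E1. if x = g e then (if g e = g e' then 1 else 0) else 0)"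
      unfolding \<phi>_def \<psi>_def using e e' by (intro sum.cong refl) auto
    also have "\<dots> = (if g e = g e' then 1 else 0)"
      using fin e e' img by auto
    also have "\<dots> = (if e = e' then 1 else 0)"
      using inj e e' by (auto dest: inj_onD)
    finally show "(\<Sum>x\<in>E1. \<phi> e x * \<psi> x e') = (if e = e' then 1 else 0)" .
  qed
  have j: "\<forall>e\<in>E1. \<forall>e'\<in>E1. (\<Sum>x\<in>E2. \<psi> e x * \<phi> x e') = (if e = e' then 1 else 0)"
  proof (intro ballI)
    fix e e' assume e: "e \<in> E1" and e': "e' \<in> E1"
    have "(\<Sum>x\<in>E2. \<psi> e x * \<phi> x e')
        = (\<Sum>x\<in>E2. (\<lambda>y. if y = e then (if y = e' then 1 else 0) else 0) (g x))"
      unfolding \<phi>_def \<psi>_def by (intro sum.cong refl) auto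
    also have "\<dots> = (\<Sum>y\<in>E1. if y = e then (if y = e' then 1 else 0) else 0)" by (rule reindex)
    also have "\<dots> = (if e = e' then 1 else 0)" using fin e by simp
    finally show "(\<Sum>x\<in>E2. \<psi> e x * \<phi> x e') = (if e = e' then 1 else 0)" .
  qed
  have c: "\<forall>al. \<forall>e2\<in>E2. \<forall>e1\<in>E1. (\<Sum>x\<in>E2. a2 al e2 x * \<phi> x e1) = (\<Sum>y\<in>E1. \<phi> e2 y * a1 al y e1)"
  proof (intro allI ballI)
    fix al e2 e1 assume e2: "e2 \<in> E2" and e1: "e1 \<in> E1"
    have "(\<Sum>x\<in>E2. a2 al e2 x * \<phi> x e1) = (\<Sum>x\<in>E2. (\<lambda>y. if e1 = y then a1 al (g e2) y else 0) (g x))"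
      unfolding \<phi>_def using act e2 by (intro sum.cong refl) auto
    also have "\<dots> = (\<Sum>y\<in>E1. if e1 = y then a1 al (g e2) y else 0)" by (rule reindex)
    also have "\<dots> = (\<Sum>y\<in>E1. if y = g e2 then a1 al y e1 else 0)"
      using fin e1 e2 img by auto
    also have "\<dots> = (\<Sum>y\<in>E1. \<phi> e2 y * a1 al y e1)"
      unfolding \<phi>_def using e2 by (intro sum.cong refl) auto
    finally show "(\<Sum>x\<in>E2. a2 al e2 x * \<phi> x e1) = (\<Sum>y\<in>E1. \<phi> e2 y * a1 al y e1)" .
  qed
  show ?thesis unfolding rep_iso_def prod.case
    by (intro exI[of _ \<phi>] exI[of _ \<psi>] conjI s t i j c)
qed

section \<open>Band modules with an arbitrary matrix\<close>

lemma index_mult_mat_sum: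
  assumes "A \<in> carrier_mat nr n" "B \<in> carrier_mat n nc" "i < nr" "j < nc"
  shows "(A * B) $$ (i, j) = (\<Sum>a<n. A $$ (i, a) * B $$ (a, j))"
  using assms by (simp add: scalar_prod_def atLeast0LessThan)

lemma sum_pairs_less:
  "(\<Sum>x\<in>{(p, j). p < (m::nat) \<and> j < (n::nat)}. f x) = (\<Sum>p<m. \<Sum>j<n. f (p, j))"
proof -
  have "{(p, j). p < m \<and> j < n} = {..<m} \<times> {..<n}" by auto
  then show ?thesis by (simp add: sum.cartesian_product)
qed

definition letter_block :: "'k::field mat \<Rightarrow> nat \<Rightarrow> nat \<Rightarrow> nat \<Rightarrow> 'k" where
  "letter_block C p j' j = (if p = 0 then C $$ (j', j) else if j' = j then 1 else 0)"

definition band_action :: "'a letter list \<Rightarrow> 'k::field mat \<Rightarrow> nat \<Rightarrow> 'a \<Rightarrow> nat \<times> nat \<Rightarrow> nat \<times> nat \<Rightarrow> 'k"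
  where "band_action B C n al = (\<lambda>(p', j') (p, j).
    if p < length B \<and> j < n \<and> p' < length B \<and> j' < n then
      (if B!p = Dir al \<and> p' = Suc p mod length B then letter_block C p j' j else 0) +
      (if B!p' = Inv al \<and> p = Suc p' mod length B then letter_block C p' j' j else 0)
    else 0)"

text \<open>
  \<open>M(B, C, n)\<close>: like \<^const>\<open>band_module\<close>, but the letter at position 0 acts by an arbitrary
  \<open>n \<times> n\<close> matrix \<open>C\<close> instead of a Jordan block; \<^const>\<open>letter_block\<close> is the matrix
  of the letter at position \<open>p\<close>.
\<close>

definition mat_band_module :: "('a \<Rightarrow> 'v) \<Rightarrow> ('a \<Rightarrow> 'v) \<Rightarrow> 'a letter list \<Rightarrow> 'k::field mat \<Rightarrow> nat
    \<Rightarrow> (nat \<times> nat, 'v, 'a, 'k) repr" where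
  "mat_band_module s t B C n =
    ({(p, j). p < length B \<and> j < n}, (\<lambda>(p, j). lsrc s t (B!p)), band_action B C n)"

lemma finite_mat_band_module [simp]: "finite (fst (mat_band_module s t B C n))"
proof -
  have "fst (mat_band_module s t B C n) = {..<length B} \<times> {..<n}"
    unfolding mat_band_module_def by auto
  then show ?thesis by simp
qed

lemma sum_band_letters:
  fixes f :: "nat \<Rightarrow> 'k::comm_monoid_add"
  assumes "p < length B" "p' < length B"
  shows "(\<Sum>p0<length B.
      (if B!p0 = Dir al \<and> p = p0 \<and> p' = Suc p0 mod length B then f p0 else 0)
    + (if B!p0 = Inv al \<and> p = Suc p0 mod length B \<and> p' = p0 then f p0 else 0))
    = (if B!p = Dir al \<and> p' = Suc p mod length B then f p else 0)
    + (if B!p' = Inv al \<and> p = Suc p' mod length B then f p' else 0)"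
proof -
  have "(\<Sum>p0<length B. if B!p0 = Dir al \<and> p = p0 \<and> p' = Suc p0 mod length B then f p0 else 0)
      = (\<Sum>p0<length B.
          if p0 = p then (if B!p = Dir al \<and> p' = Suc p mod length B then f p else 0) else 0)"
    by (rule sum.cong) auto
  moreover have
    "(\<Sum>p0<length B. if B!p0 = Inv al \<and> p = Suc p0 mod length B \<and> p' = p0 then f p0 else 0)
      = (\<Sum>p0<length B.
          if p0 = p' then (if B!p' = Inv al \<and> p = Suc p' mod length B then f p' else 0) else 0)"
    by (rule sum.cong) auto
  ultimately show ?thesis using assms by (simp add: sum.distrib)
qed

lemma band_module_eq_mat_band_module:
  "band_module s t B lam n = mat_band_module s t B (jordan_block n lam) n"
proof -
  have "snd (snd (band_module s t B lam n)) al (p', j') (p, j)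
      = band_action B (jordan_block n lam) n al (p', j') (p, j)" for al p' j' p j
  proof (cases "p < length B \<and> j < n \<and> p' < length B \<and> j' < n")
    case True
    have block: "(if p0 = 0 then jordan lam j' j else if j' = j then 1 else 0)
        = letter_block (jordan_block n lam) p0 j' j" for p0
      using True by (simp add: letter_block_def jordan_def)
    show ?thesis unfolding band_module_def Let_def band_action_def
      by (simp only: prod.case mem_Collect_eq conj_assoc if_P[OF True] snd_conv block
          sum_band_letters[of p B p' al "\<lambda>p0. letter_block (jordan_block n lam) p0 j' j"] True)
  next
    case False
    then show ?thesis unfolding band_module_def Let_def band_action_def
      by (simp only: prod.case mem_Collect_eq conj_assoc if_not_P[OF False] if_False snd_conv)
  qed
  then show ?thesis unfolding mat_band_module_def
    by (intro prod_eqI ext) (auto simp: band_module_def Let_def)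
qed

definition positionwise :: "nat \<Rightarrow> nat \<Rightarrow> 'k::field mat \<Rightarrow> nat \<times> nat \<Rightarrow> nat \<times> nat \<Rightarrow> 'k" where
  "positionwise m n Q =
    (\<lambda>(p', j') (p, j). if p' = p \<and> p < m \<and> j < n \<and> j' < n then Q $$ (j', j) else 0)"

lemma positionwise_support:
  "positionwise m n Q e' e \<noteq> 0 \<Longrightarrow> \<exists>p j' j. e' = (p, j') \<and> e = (p, j) \<and> p < m \<and> j < n \<and> j' < n"
  unfolding positionwise_def by (cases e; cases e') (auto split: if_splits)

lemma sum_positionwise_right:
  assumes "p1 < m" "j1 < n"
  shows "(\<Sum>x\<in>{(p, j). p < m \<and> j < n}. f x * positionwise m n Q x (p1, j1))
    = (\<Sum>b<n. f (p1, b) * Q $$ (b, j1))"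
proof -
  have "(\<Sum>x\<in>{(p, j). p < m \<and> j < n}. f x * positionwise m n Q x (p1, j1))
      = (\<Sum>p<m. if p = p1 then (\<Sum>b<n. f (p1, b) * Q $$ (b, j1)) else 0)"
    unfolding sum_pairs_less positionwise_def using assms by (intro sum.cong refl) auto
  then show ?thesis using assms by simp
qed

lemma sum_positionwise_left:
  assumes "p2 < m" "j2 < n"
  shows "(\<Sum>x\<in>{(p, j). p < m \<and> j < n}. positionwise m n Q (p2, j2) x * g x)
    = (\<Sum>b<n. Q $$ (j2, b) * g (p2, b))"
proof -
  have "(\<Sum>x\<in>{(p, j). p < m \<and> j < n}. positionwise m n Q (p2, j2) x * g x)
      = (\<Sum>p<m. if p = p2 then (\<Sum>b<n. Q $$ (j2, b) * g (p2, b)) else 0)"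
    unfolding sum_pairs_less positionwise_def using assms by (intro sum.cong refl) auto
  then show ?thesis using assms by simp
qed

lemma positionwise_inverse:
  assumes P: "P \<in> carrier_mat n n" and Q: "Q \<in> carrier_mat n n" and PQ: "P * Q = 1\<^sub>m n"
    and e: "e \<in> {(p, j). p < m \<and> j < n}" "e' \<in> {(p, j). p < m \<and> j < n}"
  shows "(\<Sum>x\<in>{(p, j). p < m \<and> j < n}. positionwise m n P e x * positionwise m n Q x e')
    = (if e = e' then 1 else 0)"
proof -
  obtain p j p' j' where pj: "e = (p, j)" "e' = (p', j')" "p < m" "j < n" "p' < m" "j' < n"
    using e by auto
  have "(\<Sum>x\<in>{(p, j). p < m \<and> j < n}. positionwise m n P e x * positionwise m n Q x e')
      = (if p = p' then (P * Q) $$ (j, j') else 0)"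
    unfolding pj sum_positionwise_right[OF pj(5,6)] index_mult_mat_sum[OF P Q pj(4,6)]
    by (auto simp: positionwise_def pj intro!: sum.neutral)
  then show ?thesis using pj PQ by simp
qed

lemma letter_block_commute:
  assumes C: "C \<in> carrier_mat n n" and D: "D \<in> carrier_mat n n" and Q: "Q \<in> carrier_mat n n"
    and DQ: "D * Q = Q * C" and j: "j2 < n" "j1 < n"
  shows "(\<Sum>b<n. letter_block D p j2 b * Q $$ (b, j1))
    = (\<Sum>b<n. Q $$ (j2, b) * letter_block C p b j1)"
proof (cases "p = 0")
  case True
  then show ?thesis
    using arg_cong[OF DQ, of "\<lambda>M. M $$ (j2, j1)"]
      index_mult_mat_sum[OF D Q j] index_mult_mat_sum[OF Q C j]
    by (simp add: letter_block_def)
next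
  case False
  then show ?thesis using j
    by (simp add: letter_block_def if_distrib[of "\<lambda>x. x * _"] if_distrib[of "\<lambda>x. _ * x"] cong: if_cong)
qed

lemma band_action_positionwise:
  fixes B :: "'a letter list" and n :: nat
  defines "E \<equiv> {(p, j). p < length B \<and> j < n}"
  assumes C: "C \<in> carrier_mat n n" and D: "D \<in> carrier_mat n n" and Q: "Q \<in> carrier_mat n n"
    and DQ: "D * Q = Q * C" and e: "e2 \<in> E" "e1 \<in> E"
  shows "(\<Sum>x\<in>E. band_action B D n al e2 x * positionwise (length B) n Q x e1)
    = (\<Sum>y\<in>E. positionwise (length B) n Q e2 y * band_action B C n al y e1)"
proof -
  obtain p2 j2 p1 j1 where pj: "e2 = (p2, j2)" "e1 = (p1, j1)"
    and bounds: "p2 < length B" "j2 < n" "p1 < length B" "j1 < n"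
    using e unfolding E_def by auto
  define forward where "forward = (B!p1 = Dir al \<and> p2 = Suc p1 mod length B)"
  define backward where "backward = (B!p2 = Inv al \<and> p1 = Suc p2 mod length B)"
  have "(\<Sum>x\<in>E. band_action B D n al e2 x * positionwise (length B) n Q x e1)
      = (\<Sum>b<n. ((if forward then letter_block D p1 j2 b else 0)
          + (if backward then letter_block D p2 j2 b else 0)) * Q $$ (b, j1))"
    unfolding E_def pj sum_positionwise_right[OF bounds(3,4)] using bounds
    by (intro sum.cong refl) (simp add: band_action_def forward_def backward_def)
  also have "\<dots> = (if forward then (\<Sum>b<n. letter_block D p1 j2 b * Q $$ (b, j1)) else 0)
      + (if backward then (\<Sum>b<n. letter_block D p2 j2 b * Q $$ (b, j1)) else 0)"
    by (simp add: distrib_right sum.distrib)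
  also have "\<dots> = (if forward then (\<Sum>b<n. Q $$ (j2, b) * letter_block C p1 b j1) else 0)
      + (if backward then (\<Sum>b<n. Q $$ (j2, b) * letter_block C p2 b j1) else 0)"
    using letter_block_commute[OF C D Q DQ bounds(2,4)] by simp
  also have "\<dots> = (\<Sum>b<n. Q $$ (j2, b) * ((if forward then letter_block C p1 b j1 else 0)
      + (if backward then letter_block C p2 b j1 else 0)))"
    by (simp add: distrib_left sum.distrib)
  also have "\<dots> = (\<Sum>y\<in>E. positionwise (length B) n Q e2 y * band_action B C n al y e1)"
    unfolding E_def pj sum_positionwise_left[OF bounds(1,2)] using bounds
    by (intro sum.cong refl) (simp add: band_action_def forward_def backward_def)
  finally show ?thesis .
qed

lemma mat_band_module_similar:
  assumes C: "C \<in> carrier_mat n n" and sim: "similar_mat C D"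
  shows "rep_iso (mat_band_module s t B C n) (mat_band_module s t B D n)"
proof -
  obtain P Q where wit: "similar_mat_wit C D P Q" using sim unfolding similar_mat_def by blast
  from similar_mat_witD2[OF C wit] have D: "D \<in> carrier_mat n n"
    and P: "P \<in> carrier_mat n n" and Q: "Q \<in> carrier_mat n n"
    and PQ: "P * Q = 1\<^sub>m n" and QP: "Q * P = 1\<^sub>m n" and CPDQ: "C = P * D * Q" by auto
  have "Q * C = (Q * P) * (D * Q)"
    unfolding CPDQ using P D Q by (simp add: assoc_mult_mat[of _ n n _ n _ n])
  then have DQ: "D * Q = Q * C" using D Q unfolding QP by simp
  let ?E = "{(p, j). p < length B \<and> j < n}"
  show ?thesis unfolding rep_iso_def mat_band_module_def prod.case
  proof (rule exI[of _ "positionwise (length B) n Q"], rule exI[of _ "positionwise (length B) n P"],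
      intro conjI)
    show "\<forall>e\<in>?E. \<forall>e'\<in>?E. (\<Sum>x\<in>?E. positionwise (length B) n Q e x * positionwise (length B) n P x e')
        = (if e = e' then 1 else 0)"
      by (intro ballI positionwise_inverse[OF Q P QP])
    show "\<forall>e\<in>?E. \<forall>e'\<in>?E. (\<Sum>x\<in>?E. positionwise (length B) n P e x * positionwise (length B) n Q x e')
        = (if e = e' then 1 else 0)"
      by (intro ballI positionwise_inverse[OF P Q PQ])
    show "\<forall>al. \<forall>e2\<in>?E. \<forall>e1\<in>?E. (\<Sum>x\<in>?E. band_action B D n al e2 x * positionwise (length B) n Q x e1)
        = (\<Sum>y\<in>?E. positionwise (length B) n Q e2 y * band_action B C n al y e1)"
      by (intro allI ballI band_action_positionwise[OF C D Q DQ])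
  qed (auto dest!: positionwise_support)
qed

section \<open>Unrolling a power of a band\<close>

text \<open>
  Index in \<open>B\<^sup>q\<close> of position \<open>p\<close> of the \<open>k\<close>-th copy of \<open>B\<close>, except that position 0 of
  copy \<open>k\<close> is taken to be the start of copy \<open>k + 1 mod q\<close>. Then the first letter of copy \<open>k\<close>
  joins \<open>(0, k)\<close> to \<open>(1, k + 1 mod q)\<close>, and it is the first letter of \<open>B\<^sup>q\<close> (the one
  carrying \<open>\<lambda>\<close>) exactly when \<open>k + 1 mod q = 0\<close>.
\<close>

definition unroll :: "nat \<Rightarrow> nat \<Rightarrow> nat \<Rightarrow> nat \<Rightarrow> nat" where
  "unroll m q p k = (if p = 0 then m * (Suc k mod q) else p + m * k)"

lemma unroll_less:
  assumes "0 < q" "p < m" "k < q"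
  shows "unroll m q p k < q * m"
proof (cases "p = 0")
  case True
  then show ?thesis using assms by (simp add: unroll_def mult.commute)
next
  case False
  have "p + m * k < m * Suc k" using assms by simp
  also have "\<dots> \<le> m * q" using assms by (intro mult_le_mono2) simp
  finally show ?thesis using False by (simp add: unroll_def mult.commute)
qed

lemma unroll_mod: "p < m \<Longrightarrow> unroll m q p k mod m = p"
  by (simp add: unroll_def)

lemma unroll_eq_0_iff: "0 < m \<Longrightarrow> unroll m q p k = 0 \<longleftrightarrow> p = 0 \<and> Suc k mod q = 0"
  by (simp add: unroll_def)

lemma Suc_mod_inj: "i < (q::nat) \<Longrightarrow> j < q \<Longrightarrow> Suc i mod q = Suc j mod q \<Longrightarrow> i = j"
  by (auto simp: mod_Suc split: if_splits)

lemma unroll_inj: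
  assumes "0 < m" "p < m" "p' < m" "k < q" "k' < q" and eq: "unroll m q p k = unroll m q p' k'"
  shows "p = p' \<and> k = k'"
proof -
  have p: "p = p'" using unroll_mod[of p m q k] unroll_mod[of p' m q k'] eq assms by simp
  show ?thesis
  proof (cases "p = 0")
    case True
    then have "Suc k mod q = Suc k' mod q" using eq p assms by (simp add: unroll_def)
    then show ?thesis using p Suc_mod_inj assms by blast
  next
    case False
    then show ?thesis using eq p assms by (simp add: unroll_def)
  qed
qed

lemma unroll_Suc:
  assumes m: "0 < m" and q: "0 < q" and p: "p < m" and k: "k < q"
  shows "Suc (unroll m q p k) mod (q * m)
    = unroll m q (Suc p mod m) (if p = 0 then Suc k mod q else k)"
proof (cases "p = 0")
  case p0: True
  show ?thesis
  proof (cases "m = 1")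
    case True
    then show ?thesis using p0 by (simp add: unroll_def mod_Suc_eq)
  next
    case False
    have "m * (Suc k mod q + 1) \<le> m * q" using q by (intro mult_le_mono2) (simp add: Suc_leI)
    then have "Suc (m * (Suc k mod q)) < q * m" using False m by (simp add: algebra_simps)
    then show ?thesis using p0 False m by (simp add: unroll_def)
  qed
next
  case False
  show ?thesis
  proof (cases "Suc p < m")
    case True
    have "Suc p + m * k < m * Suc k" using True by simp
    also have "\<dots> \<le> m * q" using k by (intro mult_le_mono2) simp
    finally show ?thesis using False True by (simp add: unroll_def mult.commute)
  next
    case last: False
    then have "Suc (p + m * k) = m * Suc k" using p by simp
    then have "Suc (p + m * k) mod (q * m) = (m * Suc k) mod (m * q)"
      by (simp only: mult.commute[of q m])
    also have "\<dots> = m * (Suc k mod q)" by (rule mult_mod_right[symmetric])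
    finally have "Suc (p + m * k) mod (q * m) = m * (Suc k mod q)" .
    moreover have "Suc p = m" using last p by simp
    ultimately show ?thesis using False by (simp add: unroll_def)
  qed
qed

lemma unroll_Suc_iff:
  assumes "0 < m" "0 < q" "p < m" "k < q" "p' < m" "k' < q"
  shows "unroll m q p' k' = Suc (unroll m q p k) mod (q * m)
    \<longleftrightarrow> p' = Suc p mod m \<and> k' = (if p = 0 then Suc k mod q else k)"
proof -
  have next_pos: "Suc p mod m < m" "(if p = 0 then Suc k mod q else k) < q" using assms by auto
  show ?thesis
    unfolding unroll_Suc[OF assms(1-4)]
    using unroll_inj[OF assms(1,5) next_pos(1) assms(6) next_pos(2)] by auto
qed

lemma nth_concat_replicate: "i < q * length B \<Longrightarrow> concat (replicate q B) ! i = B ! (i mod length B)"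
proof (induction q arbitrary: i)
  case (Suc q)
  show ?case
  proof (cases "i < length B")
    case False
    then have "concat (replicate q B) ! (i - length B) = B ! ((i - length B) mod length B)"
      using Suc by (intro Suc.IH) simp
    then show ?thesis using False by (simp add: nth_append le_mod_geq)
  qed (simp add: nth_append)
qed simp

lemma nth_concat_replicate_unroll:
  assumes "p < length B" "k < q"
  shows "concat (replicate q B) ! unroll (length B) q p k = B ! p"
  using nth_concat_replicate[of "unroll (length B) q p k" q B] assms
    unroll_less[of q p "length B" k] unroll_mod[of p "length B" q k] by simp

lemma bij_betw_unroll:
  assumes m: "0 < m" and q: "0 < q"
  shows "bij_betw (\<lambda>(p, k). (unroll m q p k, 0::nat))
    {(p, k). p < m \<and> k < q} {(P, j). P < q * m \<and> j < 1}"
proof -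
  let ?g = "\<lambda>(p, k). (unroll m q p k, 0::nat)"
  have inj: "inj_on ?g {(p, k). p < m \<and> k < q}"
  proof (rule inj_onI)
    fix x y assume x: "x \<in> {(p, k). p < m \<and> k < q}" and y: "y \<in> {(p, k). p < m \<and> k < q}"
      and eq: "?g x = ?g y"
    obtain p k p' k' where "x = (p, k)" "y = (p', k')" "p < m" "k < q" "p' < m" "k' < q"
      using x y by auto
    with eq show "x = y" using unroll_inj[OF m, of p p' k q k'] by simp
  qed
  have sub: "?g ` {(p, k). p < m \<and> k < q} \<subseteq> {(P, j). P < q * m \<and> j < 1}"
    using unroll_less[OF q] by fastforce
  have card: "card (?g ` {(p, k). p < m \<and> k < q}) = card {(P, j). P < q * m \<and> j < (1::nat)}"
  proof -
    have "{(p, k). p < m \<and> k < q} = {..<m} \<times> {..<q}"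
      and "{(P, j). P < q * m \<and> j < (1::nat)} = {..<q * m} \<times> {0}"
      by auto
    then show ?thesis unfolding card_image[OF inj] by (simp add: card_cartesian_product)
  qed
  have fin: "finite {(P, j). P < q * m \<and> j < (1::nat)}"
    by (rule finite_subset[of _ "{..<q * m} \<times> {..<1}"]) auto
  show ?thesis unfolding bij_betw_def using inj card_subset_eq[OF fin sub card] by blast
qed

text \<open>
  The companion matrix of \<open>x\<^sup>q - \<lambda>\<close>: it maps the \<open>k\<close>-th unit vector to the \<open>(k + 1)\<close>-st
  for \<open>k < q - 1\<close> and the last one to \<open>\<lambda>\<close> times the first. An inverse first letter points
  from position 1 to position 0, which transposes its matrix.
\<close>

definition cyclic_twist :: "nat \<Rightarrow> 'k::field \<Rightarrow> 'k mat" where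
  "cyclic_twist q lam =
    mat q q (\<lambda>(k', k). if k' = Suc k mod q then (if k' = 0 then lam else 1) else 0)"

definition band_power_mat :: "'a letter list \<Rightarrow> nat \<Rightarrow> 'k::field \<Rightarrow> 'k mat" where
  "band_power_mat B q lam =
    (case B!0 of Dir _ \<Rightarrow> cyclic_twist q lam | Inv _ \<Rightarrow> (cyclic_twist q lam)\<^sup>T)"

lemma cyclic_twist_mult_vec:
  assumes v: "v \<in> carrier_vec q" and k: "k < q"
  shows "(cyclic_twist q lam *\<^sub>v v) $ (Suc k mod q) = (if Suc k mod q = 0 then lam else 1) * v $ k"
proof -
  have "(cyclic_twist q lam *\<^sub>v v) $ (Suc k mod q)
      = (\<Sum>k'<q. cyclic_twist q lam $$ (Suc k mod q, k') * v $ k')"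
    using v k by (simp add: cyclic_twist_def scalar_prod_def atLeast0LessThan)
  also have "\<dots> = (\<Sum>k'<q. if k' = k then (if Suc k mod q = 0 then lam else 1) * v $ k' else 0)"
    using k by (intro sum.cong refl) (auto simp: cyclic_twist_def dest: Suc_mod_inj)
  finally show ?thesis using k by simp
qed

lemma det_cyclic_twist_nonzero:
  assumes "lam \<noteq> 0"
  shows "det (cyclic_twist q lam) \<noteq> 0"
proof
  assume "det (cyclic_twist q lam) = 0"
  then obtain v where v: "v \<in> carrier_vec q" "v \<noteq> 0\<^sub>v q" "cyclic_twist q lam *\<^sub>v v = 0\<^sub>v q"
    using det_0_iff_vec_prod_zero_field[of "cyclic_twist q lam" q] by (auto simp: cyclic_twist_def)
  have "v $ k = 0" if "k < q" for k
    using cyclic_twist_mult_vec[OF v(1) that, of lam] v(3) that assms by (simp split: if_splits)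
  then have "v = 0\<^sub>v q" using v(1) by (intro eq_vecI) auto
  with v(2) show False ..
qed

lemma band_power_mat_carrier: "band_power_mat B q lam \<in> carrier_mat q q"
  by (auto simp: band_power_mat_def cyclic_twist_def split: letter.split)

lemma det_band_power_mat_nonzero: "lam \<noteq> 0 \<Longrightarrow> det (band_power_mat B q lam) \<noteq> 0"
  using det_cyclic_twist_nonzero det_transpose[of "cyclic_twist q lam" q]
  by (auto simp: band_power_mat_def cyclic_twist_def split: letter.split)

lemma band_action_band_power_mat:
  fixes B :: "'a letter list" and lam :: "'k::field"
  defines "m \<equiv> length B"
  assumes m: "0 < m" and q: "0 < q" and e: "p < m" "k < q" and e': "p' < m" "k' < q"
  shows "band_action B (band_power_mat B q lam) q al (p', k') (p, k)
    = band_action (concat (replicate q B)) (jordan_block 1 lam) 1 al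
        (unroll m q p' k', 0) (unroll m q p k, 0)"
proof -
  define Bq where "Bq = concat (replicate q B)"
  define C where "C = band_power_mat B q lam"
  have len: "length Bq = q * m"
    unfolding Bq_def m_def by (simp add: length_concat sum_list_replicate)
  have nth: "Bq ! unroll m q p k = B ! p" if "p < m" "k < q" for p k
    using nth_concat_replicate_unroll that unfolding Bq_def m_def .
  have lam_block: "letter_block (jordan_block 1 lam) P 0 0 = (if P = 0 then lam else 1)" for P
    by (simp add: letter_block_def)
  have forward: "(if B!p = Dir al \<and> p' = Suc p mod m then letter_block C p k' k else 0)
    = (if Bq ! unroll m q p k = Dir al \<and> unroll m q p' k' = Suc (unroll m q p k) mod (q * m)
       then letter_block (jordan_block 1 lam) (unroll m q p k) 0 0 else 0)"
    unfolding unroll_Suc_iff[OF m q e e'] unroll_eq_0_iff[OF m] lam_block nth[OF e]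
    using e(2) e'(2)
    by (cases "p = 0") (auto simp: letter_block_def C_def band_power_mat_def cyclic_twist_def)
  have backward: "(if B!p' = Inv al \<and> p = Suc p' mod m then letter_block C p' k' k else 0)
    = (if Bq ! unroll m q p' k' = Inv al \<and> unroll m q p k = Suc (unroll m q p' k') mod (q * m)
       then letter_block (jordan_block 1 lam) (unroll m q p' k') 0 0 else 0)"
    unfolding unroll_Suc_iff[OF m q e' e] unroll_eq_0_iff[OF m] lam_block nth[OF e']
    using e(2) e'(2)
    by (cases "p' = 0") (auto simp: letter_block_def C_def band_power_mat_def cyclic_twist_def)
  show ?thesis
    unfolding band_action_def prod.case Bq_def[symmetric] C_def[symmetric] m_def[symmetric] len
    using e e' unroll_less[OF q] forward backward by simp
qed

lemma band_module_power_iso: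
  fixes lam :: "'k::field"
  assumes B: "B \<noteq> []" and q: "0 < q"
  shows "rep_iso (band_module s t (concat (replicate q B)) lam 1)
    (mat_band_module s t B (band_power_mat B q lam) q)"
proof -
  define m where "m = length B"
  have m: "0 < m" using B unfolding m_def by simp
  have len: "length (concat (replicate q B)) = q * m"
    unfolding m_def by (simp add: length_concat sum_list_replicate)
  show ?thesis
    unfolding band_module_eq_mat_band_module mat_band_module_def len m_def[symmetric]
  proof (rule rep_iso_of_bij[OF bij_betw_unroll[OF m q]])
    show "finite {(P, j). P < q * m \<and> j < (1::nat)}"
      by (rule finite_subset[of _ "{..<q * m} \<times> {..<1}"]) auto
  next
    fix e assume "e \<in> {(p, k). p < m \<and> k < q}"
    then show "(\<lambda>(p, j). lsrc s t (concat (replicate q B) ! p)) ((\<lambda>(p, k). (unroll m q p k, 0)) e)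
        = (\<lambda>(p, j). lsrc s t (B ! p)) e"
      unfolding m_def by (auto simp: nth_concat_replicate_unroll)
  next
    fix al e e' assume "e \<in> {(p, k). p < m \<and> k < q}" "e' \<in> {(p, k). p < m \<and> k < q}"
    then show "band_action B (band_power_mat B q lam) q al e' e
      = band_action (concat (replicate q B)) (jordan_block 1 lam) 1 al
          ((\<lambda>(p, k). (unroll m q p k, 0)) e') ((\<lambda>(p, k). (unroll m q p k, 0)) e)"
      using band_action_band_power_mat[OF m[unfolded m_def] q] unfolding m_def by auto
  qed
qed

section \<open>Splitting along Jordan blocks\<close>

definition block_offset :: "(nat \<times> 'k) list \<Rightarrow> nat \<Rightarrow> nat" where
  "block_offset ns k = sum_list (map fst (take k ns))"

lemma block_offset_0 [simp]: "block_offset ns 0 = 0"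
  by (simp add: block_offset_def)

lemma block_offset_Cons_Suc [simp]: "block_offset (x # ns) (Suc k) = fst x + block_offset ns k"
  by (simp add: block_offset_def)

lemma block_offset_less:
  "k < length ns \<Longrightarrow> j < fst (ns ! k) \<Longrightarrow> block_offset ns k + j < sum_list (map fst ns)"
proof (induction ns arbitrary: k)
  case (Cons x ns)
  then show ?case by (cases k) auto
qed simp

lemma block_offset_inj:
  "k < length ns \<Longrightarrow> j < fst (ns ! k) \<Longrightarrow> k' < length ns \<Longrightarrow> j' < fst (ns ! k') \<Longrightarrow>
   block_offset ns k + j = block_offset ns k' + j' \<Longrightarrow> k = k' \<and> j = j'"
proof (induction ns arbitrary: k k')
  case (Cons x ns)
  show ?case
  proof (cases k; cases k')
    fix k1 k1' assume "k = Suc k1" "k' = Suc k1'"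
    then show ?thesis using Cons.prems Cons.IH[of k1 k1'] by auto
  qed (use Cons.prems in auto)
qed simp

lemma block_offset_surj:
  "i < sum_list (map fst ns) \<Longrightarrow> \<exists>k j. k < length ns \<and> j < fst (ns ! k) \<and> i = block_offset ns k + j"
proof (induction ns arbitrary: i)
  case (Cons x ns)
  show ?case
  proof (cases "i < fst x")
    case True
    then show ?thesis by (intro exI[of _ 0] exI[of _ i]) auto
  next
    case False
    then have "i - fst x < sum_list (map fst ns)" using Cons.prems by simp
    then obtain k j where "k < length ns" "j < fst (ns ! k)" "i - fst x = block_offset ns k + j"
      using Cons.IH by blast
    then show ?thesis using False by (intro exI[of _ "Suc k"] exI[of _ j]) auto
  qed
qed simp

lemma jordan_matrix_block_offset:
  "k < length ns \<Longrightarrow> l < length ns \<Longrightarrow> i < fst (ns ! k) \<Longrightarrow> j < fst (ns ! l) \<Longrightarrow>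
   jordan_matrix ns $$ (block_offset ns k + i, block_offset ns l + j)
     = (if k = l then jordan_block (fst (ns ! k)) (snd (ns ! k)) $$ (i, j) else 0)"
proof (induction ns arbitrary: k l)
  case (Cons x ns)
  obtain n a where x: "x = (n, a)" by (cases x)
  have split: "jordan_matrix ((n, a) # ns) = four_block_mat (jordan_block n a)
    (0\<^sub>m n (sum_list (map fst ns))) (0\<^sub>m (sum_list (map fst ns)) n) (jordan_matrix ns)"
    unfolding jordan_matrix_def by (simp add: Let_def jordan_matrix_def[symmetric])
  note bound = block_offset_less[of _ ns]
  show ?case
  proof (cases k)
    case 0
    show ?thesis
    proof (cases l)
      case (Suc l1)
      then show ?thesis using 0 Cons.prems bound[of l1 j] by (simp add: split x)
    qed (use 0 Cons.prems in \<open>simp add: split x\<close>)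
  next
    case (Suc k1)
    show ?thesis
    proof (cases l)
      case 0
      then show ?thesis using Suc Cons.prems bound[of k1 i] by (simp add: split x)
    next
      case (Suc l1)
      then show ?thesis
        using \<open>k = Suc k1\<close> Cons.prems Cons.IH[of k1 l1] bound[of k1 i] bound[of l1 j]
        by (simp add: split x)
    qed
  qed
qed simp

lemma bij_betw_block_offset:
  fixes ns :: "(nat \<times> 'k) list" and m :: nat
  defines "E \<equiv> {(k, p, j). k < length ns \<and> p < m \<and> j < fst (ns ! k)}"
  shows "bij_betw (\<lambda>(k, p, j). (p, block_offset ns k + j)) E
    {(p, i). p < m \<and> i < sum_list (map fst ns)}"
proof (rule bij_betw_imageI)
  show "inj_on (\<lambda>(k, p, j). (p, block_offset ns k + j)) E"
    unfolding E_def by (rule inj_onI) (auto dest: block_offset_inj)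
  show "(\<lambda>(k, p, j). (p, block_offset ns k + j)) ` E = {(p, i). p < m \<and> i < sum_list (map fst ns)}"
  proof (rule subset_antisym)
    show "{(p, i). p < m \<and> i < sum_list (map fst ns)} \<subseteq> (\<lambda>(k, p, j). (p, block_offset ns k + j)) ` E"
    proof clarify
      fix p i assume "p < m" "i < sum_list (map fst ns)"
      moreover obtain k j where "k < length ns" "j < fst (ns ! k)" "i = block_offset ns k + j"
        using block_offset_surj[OF \<open>i < sum_list (map fst ns)\<close>] by blast
      ultimately show "(p, i) \<in> (\<lambda>(k, p, j). (p, block_offset ns k + j)) ` E"
        unfolding E_def by (auto intro!: image_eqI[where x = "(k, p, j)"])
    qed
  qed (use block_offset_less in \<open>fastforce simp: E_def\<close>)
qed

lemma letter_block_jordan_matrix: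
  assumes "k < length ns" "j < fst (ns ! k)" "k' < length ns" "j' < fst (ns ! k')"
  shows "letter_block (jordan_matrix ns) p (block_offset ns k' + j') (block_offset ns k + j)
    = (if k' = k then letter_block (jordan_block (fst (ns ! k)) (snd (ns ! k))) p j' j else 0)"
  using jordan_matrix_block_offset[OF assms(3,1,4,2)] block_offset_inj[OF assms(3,4,1,2)] assms
  by (auto simp: letter_block_def)

lemma band_action_jordan_matrix:
  assumes "k < length ns" "j < fst (ns ! k)" "k' < length ns" "j' < fst (ns ! k')"
    and "p < length B" "p' < length B"
  shows "band_action B (jordan_matrix ns) (sum_list (map fst ns)) al
      (p', block_offset ns k' + j') (p, block_offset ns k + j)
    = (if k' = k
       then band_action B (jordan_block (fst (ns ! k)) (snd (ns ! k))) (fst (ns ! k)) al (p', j') (p, j)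
       else 0)"
  unfolding band_action_def prod.case letter_block_jordan_matrix[OF assms(1-4)]
  using assms block_offset_less[OF assms(1,2)] block_offset_less[OF assms(3,4)] by auto

lemma mat_band_module_jordan_matrix_iso:
  fixes ns :: "(nat \<times> 'k::field) list"
  shows "rep_iso (mat_band_module s t B (jordan_matrix ns) (sum_list (map fst ns)))
    (dsum (map (\<lambda>(n, a). band_module s t B a n) ns))"
proof -
  define N where "N = sum_list (map fst ns)"
  define Ms where "Ms = map (\<lambda>(n, a). band_module s t B a n) ns"
  have Ms: "Ms ! k
      = mat_band_module s t B (jordan_block (fst (ns ! k)) (snd (ns ! k))) (fst (ns ! k))"
    if "k < length ns" for k
    using that unfolding Ms_def by (simp add: band_module_eq_mat_band_module case_prod_beta)
  have len: "length Ms = length ns" unfolding Ms_def by simp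
  define E where "E = {(k, p, j). k < length ns \<and> p < length B \<and> j < fst (ns ! k)}"
  have E: "fst (dsum Ms) = E"
    unfolding dsum_def E_def using Ms by (auto simp: Ms_def mat_band_module_def)
  define g where "g = (\<lambda>(k::nat, p::nat, j). (p, block_offset ns k + j))"
  have bij: "bij_betw g E {(p, i). p < length B \<and> i < N}"
    unfolding g_def E_def N_def by (rule bij_betw_block_offset)
  have "rep_iso (mat_band_module s t B (jordan_matrix ns) N)
      (E, fst (snd (dsum Ms)), snd (snd (dsum Ms)))"
    unfolding mat_band_module_def
  proof (rule rep_iso_of_bij[OF bij])
    show "finite {(p, i). p < length B \<and> i < N}"
      using finite_mat_band_module[of s t B _ N] by (simp add: mat_band_module_def)
  next
    fix e assume "e \<in> E"
    then show "(\<lambda>(p, j). lsrc s t (B ! p)) (g e) = fst (snd (dsum Ms)) e"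
      by (auto simp: E_def g_def dsum_def Ms mat_band_module_def Ms_def[symmetric])
  next
    fix al e e' assume "e \<in> E" "e' \<in> E"
    then obtain k p j k' p' j'
      where e: "e = (k, p, j)" "k < length ns" "p < length B" "j < fst (ns ! k)"
      and e': "e' = (k', p', j')" "k' < length ns" "p' < length B" "j' < fst (ns ! k')"
      unfolding E_def by auto
    show "snd (snd (dsum Ms)) al e' e = band_action B (jordan_matrix ns) N al (g e') (g e)"
      unfolding e(1) e'(1) g_def prod.case N_def
        band_action_jordan_matrix[OF e(2,4) e'(2,4) e(3) e'(3)]
      using e e' by (auto simp: dsum_def Ms len mat_band_module_def)
  qed
  then show ?thesis unfolding N_def Ms_def[symmetric] E[symmetric] by simp
qed

lemma band_module_power_iso_dsum:
  fixes lam :: "'k::field"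
  assumes alg: "alg_closed TYPE('k)" and B: "B \<noteq> []" and q: "0 < q" and lam: "lam \<noteq> 0"
  obtains ns where "\<forall>(n, a) \<in> set ns. 0 < n \<and> a \<noteq> 0" "sum_list (map fst ns) = q"
    "rep_iso (band_module s t (concat (replicate q B)) lam 1)
      (dsum (map (\<lambda>(n, a). band_module s t B a n) ns))"
proof -
  let ?C = "band_power_mat B q lam"
  obtain ns where jnf: "jordan_nf ?C ns"
    using jordan_nf_exists_if_alg_closed[OF alg band_power_mat_carrier] .
  then have sim: "similar_mat ?C (jordan_matrix ns)" and nonzero_size: "0 \<notin> fst ` set ns"
    unfolding jordan_nf_def by auto
  have blocks: "\<forall>(n, a) \<in> set ns. 0 < n \<and> a \<noteq> 0"
  proof clarify
    fix n a assume block: "(n, a) \<in> set ns"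
    then have "n \<noteq> 0" using nonzero_size by force
    then show "0 < n \<and> a \<noteq> 0"
      using jordan_nf_eigenvalue_nonzero[OF band_power_mat_carrier
          det_band_power_mat_nonzero[OF lam] jnf block]
      by simp
  qed
  have size: "sum_list (map fst ns) = q"
  proof -
    obtain P Q where "similar_mat_wit ?C (jordan_matrix ns) P Q"
      using sim unfolding similar_mat_def by blast
    from similar_mat_witD2[OF band_power_mat_carrier this] have "jordan_matrix ns \<in> carrier_mat q q"
      by blast
    then show ?thesis by auto
  qed
  have unrolled:
    "rep_iso (band_module s t (concat (replicate q B)) lam 1) (mat_band_module s t B ?C q)"
    by (rule band_module_power_iso[OF B q])
  have jordan: "rep_iso (mat_band_module s t B ?C q) (mat_band_module s t B (jordan_matrix ns) q)"
    by (rule mat_band_module_similar[OF band_power_mat_carrier sim])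
  have split: "rep_iso (mat_band_module s t B (jordan_matrix ns) q)
      (dsum (map (\<lambda>(n, a). band_module s t B a n) ns))"
    using mat_band_module_jordan_matrix_iso[of s t B ns] unfolding size .
  show thesis
    using that[OF blocks size] rep_iso_trans[OF rep_iso_trans[OF unrolled jordan finite_mat_band_module]
        split finite_mat_band_module] .
qed

lemma fam_power_subset_fam_mult:
  assumes "alg_closed TYPE('k::field)" and "B \<noteq> []" and "0 < q"
  shows "(fam_power s t R d B q :: ('a::finite \<times> nat \<times> nat \<Rightarrow> 'k) set) \<subseteq> fam_mult s t R d B q"
proof
  fix x :: "'a \<times> nat \<times> nat \<Rightarrow> 'k"
  assume "x \<in> fam_power s t R d B q"
  then obtain lam :: 'k where x: "x \<in> mod_var s t R d" and lam: "lam \<noteq> 0"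
    and iso_power: "rep_iso (point_rep s t d x) (band_module s t (concat (replicate q B)) lam 1)"
    unfolding fam_power_def by blast
  obtain ns where blocks: "\<forall>(n, a) \<in> set ns. 0 < n \<and> a \<noteq> 0" and size: "sum_list (map fst ns) = q"
    and iso_dsum: "rep_iso (band_module s t (concat (replicate q B)) lam 1)
      (dsum (map (\<lambda>(n, a). band_module s t B a n) ns))"
    using band_module_power_iso_dsum[OF assms lam] .
  define ps where "ps = map (\<lambda>(n, a). (a, n)) ns"
  have "map (\<lambda>(lam, qk). band_module s t B lam qk) ps = map (\<lambda>(n, a). band_module s t B a n) ns"
    unfolding ps_def by (induction ns) auto
  moreover have "finite (fst (band_module s t (concat (replicate q B)) lam 1))"
    unfolding band_module_eq_mat_band_module by (rule finite_mat_band_module)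
  ultimately have iso:
    "rep_iso (point_rep s t d x) (dsum (map (\<lambda>(lam, qk). band_module s t B lam qk) ps))"
    using rep_iso_trans[OF iso_power iso_dsum] by simp
  have ps_blocks: "\<forall>(lam, qk) \<in> set ps. lam \<noteq> 0 \<and> qk \<ge> 1" using blocks unfolding ps_def by auto
  have ps_size: "(\<Sum>(lam, qk)\<leftarrow>ps. qk) = q" unfolding ps_def size[symmetric] by (induction ns) auto
  show "x \<in> fam_mult s t R d B q"
    unfolding fam_mult_def using x ps_blocks ps_size iso by blast
qed

lemma subset_zariski_closure: "S \<subseteq> zariski_closure S"
  unfolding zariski_closure_def by blast

theorem mainTheorem4:
  fixes s t :: "'a::finite \<Rightarrow> 'v::finite"
    and R :: "('a \<times> 'a) set"
    and B :: "'a letter list"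
    and q :: nat
  assumes "alg_closed TYPE('k::field)"
    and "gentle s t R"
    and "minimal_band s t R B"
    and "q > 1"
  shows "(fam_power s t R (band_dimvec s t B q) B q :: ('a \<times> nat \<times> nat \<Rightarrow> 'k) set)
           \<subseteq> zariski_closure (fam_mult s t R (band_dimvec s t B q) B q)"
proof -
  have "B \<noteq> []" using assms(3) unfolding minimal_band_def is_band_def by simp
  moreover have "0 < q" using assms(4) by simp
  ultimately have "(fam_power s t R (band_dimvec s t B q) B q :: ('a \<times> nat \<times> nat \<Rightarrow> 'k) set)
      \<subseteq> fam_mult s t R (band_dimvec s t B q) B q"
    by (rule fam_power_subset_fam_mult[OF assms(1)])
  also have "\<dots> \<subseteq> zariski_closure (fam_mult s t R (band_dimvec s t B q) B q)"
    by (rule subset_zariski_closure)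
  finally show ?thesis .
qed

end
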